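(* Let $F,G,H$ be graphs. (a) If $F\to G$ and $c=\mathsf{HDE}(F,G)$, then $\hom(F,T)\ge \hom(G,T)^c$ for all graphs $T$. (b) The relation $\succcurlyeq$ (where $F\succcurlyeq G$ means $F\to G$ and $\mathsf{HDE}(F,G)\ge1$) is a partial order on graphs. (c) If $F\to G$ and $G\to H$, then $\mathsf{HDE}(F,H)\ge \mathsf{HDE}(F,G)\cdot\mathsf{HDE}(G,H)$. (d) If $F\to G$, then $\mathsf{HDE}(m\cdot F,n\cdot G)=\frac mn\,\mathsf{HDE}(F,G)$ for all positive integers $m,n$. (e) If there is a homomorphism from $F$ onto $G$ that is surjective on vertices, then $F\succcurlyeq G$. (f) If $F\to G$, then $\mathsf{HDE}(F,G)>0$ if and only if $\bigcup_{\varphi\in\mathsf{Hom}(F,G)}\varphi(V_F)=V_G$.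
   Context: Graphs are finite directed graphs $G=(V_G,E_G)$ with $V_G$ nonempty finite and $E_G\subseteq V_G\times V_G$ (loops allowed). A homomorphism $\varphi:F\to G$ is a map $V_F\to V_G$ with $(\varphi(a),\varphi(b))\in E_G$ for all $(a,b)\in E_F$; $\mathsf{Hom}(F,G)$ is their set, $\hom(F,G)$ its size, and $F\to G$ means $\hom(F,G)\ge1$. For $F\to G$, $\mathsf{HDE}(F,G)=\sup\{c\in\mathbb R:\hom(F,T)\ge\hom(G,T)^c\text{ for all graphs }T\}$. $k\cdot G$ denotes the disjoint union of $k$ copies of $G$. *)

theory Defs
  imports Complex_Main "HOL-Library.FuncSet" "HOL-Library.Nat_Bijection"
begin

text \<open>Vertices are natural numbers;
  every finite graph is isomorphic to one of these, and all notions below are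
  invariant under isomorphism, so quantifying over test graphs T of this
  form is quantifying over all graphs up to isomorphism.\<close>

type_synonym graph = "nat set \<times> (nat \<times> nat) set"

definition verts :: "graph \<Rightarrow> nat set" where "verts G = fst G"
definition arcs :: "graph \<Rightarrow> (nat \<times> nat) set" where "arcs G = snd G"

definition wf_graph :: "graph \<Rightarrow> bool" where
  "wf_graph G \<longleftrightarrow> finite (verts G) \<and> verts G \<noteq> {} \<and> arcs G \<subseteq> verts G \<times> verts G"

definition Hom :: "graph \<Rightarrow> graph \<Rightarrow> (nat \<Rightarrow> nat) set" where
  "Hom F G = {f. f \<in> verts F \<rightarrow>\<^sub>E verts G \<and> (\<forall>(a,b)\<in>arcs F. (f a, f b) \<in> arcs G)}"

definition hom :: "graph \<Rightarrow> graph \<Rightarrow> nat" where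
  "hom F G = card (Hom F G)"

definition homto :: "graph \<Rightarrow> graph \<Rightarrow> bool" where
  "homto F G \<longleftrightarrow> hom F G \<ge> 1"

text \<open>Homomorphism domination exponent. Convention: 0 powr c = 0 (Isabelle's powr).\<close>
definition HDE :: "graph \<Rightarrow> graph \<Rightarrow> real" where
  "HDE F G = Sup {c::real. \<forall>T. wf_graph T \<longrightarrow> real (hom G T) powr c \<le> real (hom F T)}"

definition succeq :: "graph \<Rightarrow> graph \<Rightarrow> bool" where
  "succeq F G \<longleftrightarrow> homto F G \<and> HDE F G \<ge> 1"

definition graph_iso :: "graph \<Rightarrow> graph \<Rightarrow> bool" where
  "graph_iso F G \<longleftrightarrow> (\<exists>f. bij_betw f (verts F) (verts G) \<and>
      (\<forall>a\<in>verts F. \<forall>b\<in>verts F. (a,b) \<in> arcs F \<longleftrightarrow> (f a, f b) \<in> arcs G))"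

definition copies :: "nat \<Rightarrow> graph \<Rightarrow> graph" where
  "copies k G = ({prod_encode (i, v) | i v. i < k \<and> v \<in> verts G},
                 {(prod_encode (i, a), prod_encode (i, b)) | i a b. i < k \<and> (a, b) \<in> arcs G})"

end

theory Submission
  imports Defs
begin

(*
  All six parts rest on one observation: for F \<rightarrow> G the set of admissible
  exponents {c. \<forall>T. hom(F,T) \<ge> hom(G,T)^c} is exactly the ray (-\<infinity>, HDE F G].  It is
  down-closed because hom(G,T) is 0 or at least 1, closed under limits from below by a
  logarithm argument, contains 0, and is bounded by |V_F| (test graph: the looped K2).
  This gives (a) directly, and (c) by composing the two inequalities.

  The remaining parts are counting arguments with explicit maps between hom-sets:
  - (e) precomposition with a vertex-surjective F \<rightarrow> G injects Hom(G,T) into Hom(F,T);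
  - (d) Hom(k \<cdot> F, T) is in bijection with Hom(F,T)^k, which rescales exponents by m/n;
  - (f) if homomorphisms cover V_G then hom(G,T) \<le> hom(F,T)^|V_G|, so HDE \<ge> 1/|V_G|;
    if a vertex v is missed, blowing v up into N twins makes hom(G,T) \<ge> N while
    hom(F,T) stays \<le> hom(F,G), so no positive exponent survives;
  - (b) reflexivity follows from (e), transitivity from (c), and antisymmetry from
    Lovasz's theorem: hom-equivalent graphs (which F \<succeq> G \<succeq> F are) are isomorphic,
    via counting vertex-surjective homomorphisms onto induced subgraphs.
*)

lemma wf_graphD:
  assumes "wf_graph G"
  shows "finite (verts G)" "verts G \<noteq> {}" "arcs G \<subseteq> verts G \<times> verts G"
  using assms unfolding wf_graph_def by auto

lemma finite_Hom: "finite (verts F) \<Longrightarrow> finite (verts T) \<Longrightarrow> finite (Hom F T)"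
  unfolding Hom_def by (rule finite_subset[of _ "verts F \<rightarrow>\<^sub>E verts T"]) (auto simp: finite_PiE)

lemma homto_iff_Hom: "finite (verts F) \<Longrightarrow> finite (verts T) \<Longrightarrow> homto F T \<longleftrightarrow> Hom F T \<noteq> {}"
  unfolding homto_def hom_def using finite_Hom[of F T] by (simp add: Suc_le_eq card_gt_0_iff)

lemma Hom_eqI:
  assumes "f \<in> Hom F T" "g \<in> Hom F T" "\<And>v. v \<in> verts F \<Longrightarrow> f v = g v"
  shows "f = g"
  using assms unfolding Hom_def by (auto intro: extensionalityI[of f "verts F"] simp: PiE_def)

lemma Hom_comp:
  assumes "wf_graph F" "f \<in> Hom F G" "g \<in> Hom G H"
  shows "restrict (g \<circ> f) (verts F) \<in> Hom F H"
  using assms wf_graphD(3)[OF assms(1)] unfolding Hom_def by (fastforce simp: PiE_def Pi_def)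

lemma homto_trans:
  assumes "wf_graph F" "wf_graph G" "finite (verts H)" "homto F G" "homto G H"
  shows "homto F H"
proof -
  have fin: "finite (verts F)" "finite (verts G)" using assms(1,2) by (simp_all add: wf_graphD)
  obtain f g where "f \<in> Hom F G" "g \<in> Hom G H"
    using assms(3-5) homto_iff_Hom fin by blast
  then show ?thesis using Hom_comp[OF assms(1)] homto_iff_Hom fin(1) assms(3) by blast
qed

lemma hom_pos_if_homto:
  assumes "wf_graph F" "wf_graph G" "wf_graph T" "homto F G" "hom G T \<noteq> 0"
  shows "hom F T \<ge> 1"
  using homto_trans[OF assms(1,2) wf_graphD(1)[OF assms(3)] assms(4)] assms(5)
  unfolding homto_def by simp

section \<open>The set of admissible exponents\<close>

definition HDE_set :: "graph \<Rightarrow> graph \<Rightarrow> real set" where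
  "HDE_set F G = {c. \<forall>T. wf_graph T \<longrightarrow> real (hom G T) powr c \<le> real (hom F T)}"

lemma HDE_eq_Sup: "HDE F G = Sup (HDE_set F G)"
  unfolding HDE_def HDE_set_def ..

lemma HDE_setD: "c \<in> HDE_set F G \<Longrightarrow> wf_graph T \<Longrightarrow> real (hom G T) powr c \<le> real (hom F T)"
  unfolding HDE_set_def by blast

lemma zero_in_HDE_set: "wf_graph F \<Longrightarrow> wf_graph G \<Longrightarrow> homto F G \<Longrightarrow> 0 \<in> HDE_set F G"
  unfolding HDE_set_def using hom_pos_if_homto by fastforce

text \<open>Since hom(G,T) is 0 or at least 1, admissibility is inherited by smaller exponents.\<close>
lemma HDE_set_down_closed:
  assumes "c \<in> HDE_set F G" "d \<le> c"
  shows "d \<in> HDE_set F G"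
  unfolding HDE_set_def
proof (intro CollectI allI impI)
  fix T assume T: "wf_graph T"
  show "real (hom G T) powr d \<le> real (hom F T)"
  proof (cases "hom G T = 0")
    case False
    then have "real (hom G T) powr d \<le> real (hom G T) powr c"
      using assms(2) by (intro powr_mono) auto
    then show ?thesis using HDE_setD[OF assms(1) T] by linarith
  qed simp
qed

lemma powr_le_of_less:
  fixes x y c :: real
  assumes x: "x \<ge> 1" and le: "\<And>d. d < c \<Longrightarrow> x powr d \<le> y"
  shows "x powr c \<le> y"
proof -
  have "0 < x powr (c - 1)" using x by simp
  also have "\<dots> \<le> y" using le by simp
  finally have y: "y > 0" .
  show ?thesis
  proof (cases "x = 1")
    case True then show ?thesis using le[of "c - 1"] by simp
  next
    case False
    then have x1: "x > 1" using x by simp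
    have "c \<le> log x y"
    proof (rule dense_le)
      fix d assume "d < c"
      then show "d \<le> log x y" using le le_log_iff[OF x1 y] by blast
    qed
    then show ?thesis using le_log_iff[OF x1 y] by blast
  qed
qed

lemma HDE_set_closed:
  assumes "\<And>d. d < c \<Longrightarrow> d \<in> HDE_set F G"
  shows "c \<in> HDE_set F G"
  unfolding HDE_set_def
proof (intro CollectI allI impI)
  fix T assume T: "wf_graph T"
  show "real (hom G T) powr c \<le> real (hom F T)"
  proof (cases "hom G T = 0")
    case False
    show ?thesis
    proof (rule powr_le_of_less)
      show "real (hom G T) \<ge> 1" using False by simp
      show "real (hom G T) powr d \<le> real (hom F T)" if "d < c" for d
        using HDE_setD[OF assms[OF that] T] .
    qed
  qed simp
qed

text \<open>The test graph K2: two vertices, all arcs and loops; every map into it is a homomorphism.\<close>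
definition K2 :: graph where "K2 = ({0, 1}, {0, 1} \<times> {0, 1})"

lemma wf_K2: "wf_graph K2"
  unfolding K2_def wf_graph_def verts_def arcs_def by auto

lemma hom_K2: "wf_graph F \<Longrightarrow> hom F K2 = 2 ^ card (verts F)"
proof -
  assume F: "wf_graph F"
  have "Hom F K2 = verts F \<rightarrow>\<^sub>E {0, 1}"
    using wf_graphD(3)[OF F] unfolding Hom_def K2_def verts_def arcs_def
    by (fastforce simp: PiE_def Pi_def)
  then show ?thesis unfolding hom_def by (simp add: card_PiE wf_graphD(1)[OF F] numeral_2_eq_2)
qed

text \<open>Testing against K2 bounds every admissible exponent by |V_F|.\<close>
lemma HDE_set_bounded:
  assumes F: "wf_graph F" and G: "wf_graph G" and c: "c \<in> HDE_set F G"
  shows "c \<le> card (verts F)"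
proof (rule ccontr)
  assume "\<not> ?thesis"
  then have lt: "card (verts F) < c" by simp
  have "card (verts G) \<ge> 1" using wf_graphD[OF G] by (simp add: Suc_le_eq card_gt_0_iff)
  then have "(2::real) \<le> 2 ^ card (verts G)"
    by (metis power_one_right power_increasing one_le_numeral)
  then have "(2::real) powr c \<le> (2 ^ card (verts G)) powr c" using lt by (intro powr_mono2) auto
  also have "\<dots> \<le> 2 ^ card (verts F)"
    using HDE_setD[OF c wf_K2] by (simp add: hom_K2 F G)
  also have "\<dots> = 2 powr card (verts F)" by (simp add: powr_realpow)
  also have "\<dots> < 2 powr c" using lt by (intro powr_less_mono) auto
  finally show False by simp
qed

lemma HDE_set_eq:
  assumes F: "wf_graph F" and G: "wf_graph G" and FG: "homto F G"
  shows "HDE_set F G = {..HDE F G}"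
proof (intro set_eqI iffI)
  have bdd: "bdd_above (HDE_set F G)" using HDE_set_bounded[OF F G] by (rule bdd_aboveI)
  have ne: "HDE_set F G \<noteq> {}" using zero_in_HDE_set[OF F G FG] by blast
  fix c
  show "c \<in> HDE_set F G \<Longrightarrow> c \<in> {..HDE F G}"
    unfolding HDE_eq_Sup using cSup_upper[OF _ bdd] by simp
  assume "c \<in> {..HDE F G}"
  then have c: "c \<le> Sup (HDE_set F G)" unfolding HDE_eq_Sup by simp
  show "c \<in> HDE_set F G"
  proof (rule HDE_set_closed)
    fix d assume "d < c"
    then have "d < Sup (HDE_set F G)" using c by simp
    then obtain s where "s \<in> HDE_set F G" "d < s" using less_cSup_iff[OF ne bdd] by blast
    then show "d \<in> HDE_set F G" using HDE_set_down_closed by fastforce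
  qed
qed

lemma HDE_admissible:
  "wf_graph F \<Longrightarrow> wf_graph G \<Longrightarrow> homto F G \<Longrightarrow> wf_graph T
   \<Longrightarrow> real (hom G T) powr HDE F G \<le> real (hom F T)"
  using HDE_setD[of "HDE F G" F G T] HDE_set_eq[of F G] by simp

lemma HDE_greatest:
  "wf_graph F \<Longrightarrow> wf_graph G \<Longrightarrow> homto F G \<Longrightarrow> c \<in> HDE_set F G \<Longrightarrow> c \<le> HDE F G"
  using HDE_set_eq by fastforce

lemma HDE_nonneg: "wf_graph F \<Longrightarrow> wf_graph G \<Longrightarrow> homto F G \<Longrightarrow> 0 \<le> HDE F G"
  using HDE_greatest zero_in_HDE_set by blast

section \<open>Composition of exponents: parts (b), (c) and (e)\<close>

text \<open>Precomposition with a vertex-surjective homomorphism F \<rightarrow> G injects Hom(G,T) into Hom(F,T).\<close>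
lemma hom_le_of_surjective_Hom:
  assumes F: "wf_graph F" and T: "finite (verts T)"
    and f: "f \<in> Hom F G" and onto: "f ` verts F = verts G"
  shows "hom G T \<le> hom F T"
proof -
  let ?pull = "\<lambda>g. restrict (g \<circ> f) (verts F)"
  have "inj_on ?pull (Hom G T)"
  proof (rule inj_onI)
    fix g g' assume g: "g \<in> Hom G T" "g' \<in> Hom G T" and eq: "?pull g = ?pull g'"
    show "g = g'"
    proof (rule Hom_eqI[OF g])
      fix v assume "v \<in> verts G"
      then obtain u where "u \<in> verts F" "v = f u" using onto by blast
      then show "g v = g' v" using fun_cong[OF eq, of u] by simp
    qed
  qed
  moreover have "?pull ` Hom G T \<subseteq> Hom F T" using Hom_comp[OF F f] by blast
  ultimately show ?thesis unfolding hom_def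
    using finite_Hom[OF wf_graphD(1)[OF F] T] by (intro card_inj_on_le)
qed

lemma succeq_of_surjective_Hom:
  assumes F: "wf_graph F" and G: "wf_graph G"
    and f: "f \<in> Hom F G" and onto: "f ` verts F = verts G"
  shows "succeq F G"
proof -
  have FG: "homto F G" using f homto_iff_Hom wf_graphD(1) F G by blast
  have "1 \<in> HDE_set F G"
    unfolding HDE_set_def using hom_le_of_surjective_Hom[OF F wf_graphD(1) f onto] by simp
  then show ?thesis using HDE_greatest[OF F G FG] FG unfolding succeq_def by simp
qed

lemma succeq_refl:
  assumes F: "wf_graph F"
  shows "succeq F F"
proof (rule succeq_of_surjective_Hom[OF F F])
  show "restrict id (verts F) \<in> Hom F F" using wf_graphD(3)[OF F] unfolding Hom_def by auto
qed auto

lemma HDE_mult_le: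
  assumes F: "wf_graph F" and G: "wf_graph G" and H: "wf_graph H"
    and FG: "homto F G" and GH: "homto G H"
  shows "HDE F G * HDE G H \<le> HDE F H"
proof (rule HDE_greatest[OF F H])
  show "homto F H" using homto_trans[OF F G wf_graphD(1)[OF H] FG GH] .
  show "HDE F G * HDE G H \<in> HDE_set F H"
    unfolding HDE_set_def
  proof (intro CollectI allI impI)
    fix T assume T: "wf_graph T"
    have "real (hom H T) powr (HDE F G * HDE G H) = (real (hom H T) powr HDE G H) powr HDE F G"
      by (simp add: powr_powr mult.commute)
    also have "\<dots> \<le> real (hom G T) powr HDE F G"
      using HDE_admissible[OF G H GH T] HDE_nonneg[OF F G FG] by (intro powr_mono2) auto
    also have "\<dots> \<le> real (hom F T)" using HDE_admissible[OF F G FG T] .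
    finally show "real (hom H T) powr (HDE F G * HDE G H) \<le> real (hom F T)" .
  qed
qed

lemma succeq_trans:
  assumes "wf_graph F" "wf_graph G" "wf_graph H" "succeq F G" "succeq G H"
  shows "succeq F H"
proof -
  have h: "homto F G" "homto G H" "1 \<le> HDE F G" "1 \<le> HDE G H"
    using assms(4,5) unfolding succeq_def by auto
  have "1 \<le> HDE F G * HDE G H" using h(3,4) by (metis mult_mono' mult_1_right zero_le_one)
  also have "\<dots> \<le> HDE F H" using HDE_mult_le[OF assms(1-3) h(1,2)] .
  finally show ?thesis
    using homto_trans[OF assms(1,2) wf_graphD(1)[OF assms(3)] h(1,2)] unfolding succeq_def by simp
qed

lemma hom_le_of_succeq:
  assumes F: "wf_graph F" and G: "wf_graph G" and FG: "succeq F G" and T: "wf_graph T"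
  shows "hom G T \<le> hom F T"
proof (cases "hom G T = 0")
  case False
  have h: "homto F G" "1 \<le> HDE F G" using FG unfolding succeq_def by auto
  have "real (hom G T) = real (hom G T) powr 1" using False by simp
  also have "\<dots> \<le> real (hom G T) powr HDE F G" using False h by (intro powr_mono) auto
  also have "\<dots> \<le> real (hom F T)" using HDE_admissible[OF F G h(1) T] .
  finally show ?thesis by simp
qed simp

section \<open>Disjoint copies: part (d)\<close>

lemma prod_encode_in_copies:
  "prod_encode (i, v) \<in> verts (copies k F) \<longleftrightarrow> i < k \<and> v \<in> verts F"
  unfolding copies_def verts_def by (auto simp: prod_encode_eq)

lemma in_copiesE:
  assumes "x \<in> verts (copies k F)"
  obtains i v where "x = prod_encode (i, v)" "i < k" "v \<in> verts F"
  using assms unfolding copies_def verts_def by auto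

lemma prod_encode_arc_copies:
  "(a, b) \<in> arcs F \<Longrightarrow> i < k \<Longrightarrow> (prod_encode (i, a), prod_encode (i, b)) \<in> arcs (copies k F)"
  unfolding copies_def arcs_def by auto

lemma arc_copiesE:
  assumes "(x, y) \<in> arcs (copies k F)"
  obtains i a b where "x = prod_encode (i, a)" "y = prod_encode (i, b)" "i < k" "(a, b) \<in> arcs F"
  using assms unfolding copies_def arcs_def by auto

text \<open>A homomorphism out of k \<cdot> F is the same as a k-tuple of homomorphisms out of F:
  split_copies and join_copies are mutually inverse bijections.\<close>
definition split_copies :: "nat \<Rightarrow> graph \<Rightarrow> (nat \<Rightarrow> nat) \<Rightarrow> nat \<Rightarrow> nat \<Rightarrow> nat" where
  "split_copies k F h = (\<lambda>i\<in>{..<k}. \<lambda>v\<in>verts F. h (prod_encode (i, v)))"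

definition join_copies :: "nat \<Rightarrow> graph \<Rightarrow> (nat \<Rightarrow> nat \<Rightarrow> nat) \<Rightarrow> nat \<Rightarrow> nat" where
  "join_copies k F H = (\<lambda>x\<in>verts (copies k F). case prod_decode x of (i, v) \<Rightarrow> H i v)"

lemma split_copies_Hom:
  assumes F: "wf_graph F" and h: "h \<in> Hom (copies k F) T"
  shows "split_copies k F h \<in> {..<k} \<rightarrow>\<^sub>E Hom F T"
proof -
  have "(\<lambda>v\<in>verts F. h (prod_encode (i, v))) \<in> Hom F T" if i: "i < k" for i
  proof -
    have "(h (prod_encode (i, a)), h (prod_encode (i, b))) \<in> arcs T" if "(a, b) \<in> arcs F" for a b
      using h prod_encode_arc_copies[OF that i] unfolding Hom_def by blast
    then show ?thesis
      using h i wf_graphD(3)[OF F] unfolding Hom_def by (fastforce simp: prod_encode_in_copies)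
  qed
  then show ?thesis unfolding split_copies_def by auto
qed

lemma join_copies_Hom:
  assumes F: "wf_graph F" and H: "H \<in> {..<k} \<rightarrow>\<^sub>E Hom F T"
  shows "join_copies k F H \<in> Hom (copies k F) T"
proof -
  have Hi: "H i \<in> Hom F T" if "i < k" for i using H that by auto
  have "H i v \<in> verts T" if "i < k" "v \<in> verts F" for i v
    using Hi[OF that(1)] that(2) unfolding Hom_def by auto
  then have "join_copies k F H \<in> verts (copies k F) \<rightarrow>\<^sub>E verts T"
    unfolding join_copies_def by (auto elim!: in_copiesE)
  moreover have "(join_copies k F H x, join_copies k F H y) \<in> arcs T"
    if xy: "(x, y) \<in> arcs (copies k F)" for x y
  proof -
    obtain i a b where e: "x = prod_encode (i, a)" "y = prod_encode (i, b)" "i < k" "(a, b) \<in> arcs F"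
      using arc_copiesE[OF xy] by blast
    then have "a \<in> verts F" "b \<in> verts F" using wf_graphD(3)[OF F] by auto
    then show ?thesis using Hi[OF e(3)] e unfolding join_copies_def Hom_def
      by (auto simp: prod_encode_in_copies)
  qed
  ultimately show ?thesis unfolding Hom_def by blast
qed

lemma join_split_copies:
  assumes h: "h \<in> Hom (copies k F) T"
  shows "join_copies k F (split_copies k F h) = h"
proof (rule extensionalityI[of _ "verts (copies k F)"])
  show "join_copies k F (split_copies k F h) \<in> extensional (verts (copies k F))"
    unfolding join_copies_def by simp
  show "h \<in> extensional (verts (copies k F))" using h unfolding Hom_def by (simp add: PiE_def)
  show "join_copies k F (split_copies k F h) x = h x" if "x \<in> verts (copies k F)" for x
    using that by (elim in_copiesE) (simp add: join_copies_def split_copies_def prod_encode_in_copies)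
qed

lemma split_join_copies:
  assumes H: "H \<in> {..<k} \<rightarrow>\<^sub>E Hom F T"
  shows "split_copies k F (join_copies k F H) = H"
proof (rule extensionalityI[of _ "{..<k}"])
  show "split_copies k F (join_copies k F H) \<in> extensional {..<k}"
    unfolding split_copies_def by simp
  show "H \<in> extensional {..<k}" using H by (simp add: PiE_def)
  fix i assume i: "i \<in> {..<k}"
  then have "H i \<in> extensional (verts F)" using H unfolding Hom_def by (auto simp: PiE_def)
  then show "split_copies k F (join_copies k F H) i = H i"
    using i unfolding split_copies_def join_copies_def
    by (auto intro!: extensionalityI[of _ "verts F"] simp: prod_encode_in_copies)
qed

lemma hom_copies:
  assumes F: "wf_graph F"
  shows "hom (copies k F) T = hom F T ^ k"
proof -
  have "bij_betw (split_copies k F) (Hom (copies k F) T) ({..<k} \<rightarrow>\<^sub>E Hom F T)"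
  proof (rule bij_betw_byWitness[where f' = "join_copies k F"])
    show "split_copies k F ` Hom (copies k F) T \<subseteq> {..<k} \<rightarrow>\<^sub>E Hom F T"
      using split_copies_Hom[OF F] by blast
    show "join_copies k F ` ({..<k} \<rightarrow>\<^sub>E Hom F T) \<subseteq> Hom (copies k F) T"
      using join_copies_Hom[OF F] by blast
  qed (simp_all add: join_split_copies split_join_copies)
  then show ?thesis unfolding hom_def by (simp add: bij_betw_same_card card_PiE)
qed

lemma powr_pow_le_iff:
  fixes x y m n :: nat and c :: real
  assumes "m > 0" "n > 0" "x > 0 \<longrightarrow> y > 0"
  shows "real (x ^ n) powr c \<le> real (y ^ m) \<longleftrightarrow> real x powr (n * c / m) \<le> real y"
proof (cases "x = 0")
  case False
  then have x: "real x > 0" and y: "real y > 0" using assms(3) by auto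
  have "real (x ^ n) powr c \<le> real (y ^ m) \<longleftrightarrow> ln (real (x ^ n) powr c) \<le> ln (real (y ^ m))"
    using x y by (subst ln_le_cancel_iff) auto
  also have "\<dots> \<longleftrightarrow> c * (n * ln x) \<le> m * ln y"
    using x y by (simp add: ln_realpow)
  also have "\<dots> \<longleftrightarrow> (n * c / m) * ln x \<le> ln y"
    using assms(1) by (simp add: field_simps)
  also have "\<dots> \<longleftrightarrow> ln (real x powr (n * c / m)) \<le> ln (real y)"
    using x by simp
  also have "\<dots> \<longleftrightarrow> real x powr (n * c / m) \<le> real y"
    using x y by (subst ln_le_cancel_iff) auto
  finally show ?thesis .
qed (use assms in \<open>simp add: zero_power\<close>)

lemma HDE_copies:
  assumes F: "wf_graph F" and G: "wf_graph G" and FG: "homto F G" and "m > 0" "n > 0"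
  shows "HDE (copies m F) (copies n G) = m / n * HDE F G"
proof -
  have pos: "hom G T > 0 \<longrightarrow> hom F T > 0" if "wf_graph T" for T
    using hom_pos_if_homto[OF F G that FG] by auto
  have "c \<in> HDE_set (copies m F) (copies n G) \<longleftrightarrow> c \<le> m / n * HDE F G" for c
  proof -
    have "c \<in> HDE_set (copies m F) (copies n G) \<longleftrightarrow>
        (\<forall>T. wf_graph T \<longrightarrow> real (hom G T ^ n) powr c \<le> real (hom F T ^ m))"
      unfolding HDE_set_def by (simp add: hom_copies F G)
    also have "\<dots> \<longleftrightarrow> n * c / m \<in> HDE_set F G"
      unfolding HDE_set_def using powr_pow_le_iff[OF assms(4,5)] pos by blast
    also have "\<dots> \<longleftrightarrow> c \<le> m / n * HDE F G"
      using HDE_set_eq[OF F G FG] assms(4,5) by (simp add: field_simps)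
    finally show ?thesis .
  qed
  then have "HDE_set (copies m F) (copies n G) = {..m / n * HDE F G}" by auto
  then show ?thesis unfolding HDE_eq_Sup by simp
qed

section \<open>Positivity of HDE: part (f)\<close>

text \<open>If the images of homomorphisms F \<rightarrow> G cover V_G, choosing one such \<phi>_v for every v
  turns g : G \<rightarrow> T into the tuple (g \<circ> \<phi>_v)_v, which determines g.\<close>
lemma hom_le_power_of_cover:
  assumes F: "wf_graph F" and G: "wf_graph G" and T: "finite (verts T)"
    and cover: "(\<Union>\<phi>\<in>Hom F G. \<phi> ` verts F) = verts G"
  shows "hom G T \<le> hom F T ^ card (verts G)"
proof -
  have "\<forall>v\<in>verts G. \<exists>\<phi>. \<phi> \<in> Hom F G \<and> v \<in> \<phi> ` verts F" using cover by blast
  then obtain \<phi> where \<phi>: "\<And>v. v \<in> verts G \<Longrightarrow> \<phi> v \<in> Hom F G \<and> v \<in> \<phi> v ` verts F"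
    by metis
  let ?tuple = "\<lambda>g. \<lambda>v\<in>verts G. restrict (g \<circ> \<phi> v) (verts F)"
  have "inj_on ?tuple (Hom G T)"
  proof (rule inj_onI)
    fix g g' assume g: "g \<in> Hom G T" "g' \<in> Hom G T" and eq: "?tuple g = ?tuple g'"
    show "g = g'"
    proof (rule Hom_eqI[OF g])
      fix v assume v: "v \<in> verts G"
      then obtain u where "u \<in> verts F" "v = \<phi> v u" using \<phi> by blast
      then show "g v = g' v" using fun_cong[OF fun_cong[OF eq, of v], of u] v by simp
    qed
  qed
  moreover have "?tuple ` Hom G T \<subseteq> verts G \<rightarrow>\<^sub>E Hom F T"
    using Hom_comp[OF F] \<phi> by fastforce
  moreover have "finite (verts G \<rightarrow>\<^sub>E Hom F T)"
    using finite_Hom[OF wf_graphD(1)[OF F] T] wf_graphD(1)[OF G] by (simp add: finite_PiE)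
  ultimately have "hom G T \<le> card (verts G \<rightarrow>\<^sub>E Hom F T)"
    unfolding hom_def by (rule card_inj_on_le)
  then show ?thesis by (simp add: card_PiE wf_graphD(1)[OF G] hom_def)
qed

lemma HDE_pos_of_cover:
  assumes F: "wf_graph F" and G: "wf_graph G" and FG: "homto F G"
    and cover: "(\<Union>\<phi>\<in>Hom F G. \<phi> ` verts F) = verts G"
  shows "HDE F G > 0"
proof -
  define k where "k = card (verts G)"
  have k: "k > 0" unfolding k_def using wf_graphD[OF G] by (simp add: card_gt_0_iff)
  have "1 / k \<in> HDE_set F G"
    unfolding HDE_set_def
  proof (intro CollectI allI impI)
    fix T assume T: "wf_graph T"
    have le: "real (hom G T) \<le> real (hom F T) ^ k"
      using hom_le_power_of_cover[OF F G wf_graphD(1)[OF T] cover] unfolding k_def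
      by (metis of_nat_le_iff of_nat_power)
    have "real (hom G T) powr (1 / k) \<le> (real (hom F T) ^ k) powr (1 / k)"
      using le by (intro powr_mono2) auto
    also have "\<dots> = real (hom F T)"
    proof (cases "hom F T = 0")
      case False
      then show ?thesis using k by (simp add: powr_realpow[symmetric] powr_powr)
    qed (use k in simp)
    finally show "real (hom G T) powr (1 / k) \<le> real (hom F T)" .
  qed
  then have "1 / k \<le> HDE F G" by (rule HDE_greatest[OF F G FG])
  moreover have "0 < 1 / real k" using k by simp
  ultimately show ?thesis by linarith
qed

text \<open>The blow-up of G at v adds N fresh vertices, each an exact twin of v: arcs of the
  blow-up are those that project to arcs of G under twin_proj, which sends the fresh
  vertices to v and fixes V_G.\<close>
definition fresh :: "graph \<Rightarrow> nat \<Rightarrow> nat set" where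
  "fresh G N = {Suc (Max (verts G))..<Suc (Max (verts G)) + N}"

definition twin_proj :: "graph \<Rightarrow> nat \<Rightarrow> nat \<Rightarrow> nat" where
  "twin_proj G v x = (if x \<in> verts G then x else v)"

definition blowup :: "graph \<Rightarrow> nat \<Rightarrow> nat \<Rightarrow> graph" where
  "blowup G v N = (verts G \<union> fresh G N,
     {(a, b) \<in> (verts G \<union> fresh G N) \<times> (verts G \<union> fresh G N).
        (twin_proj G v a, twin_proj G v b) \<in> arcs G})"

lemma fresh_notin_verts: "finite (verts G) \<Longrightarrow> d \<in> fresh G N \<Longrightarrow> d \<notin> verts G"
  unfolding fresh_def using Max_ge[of "verts G"] by fastforce

lemma verts_blowup: "verts (blowup G v N) = verts G \<union> fresh G N"
  and arcs_blowup: "arcs (blowup G v N) = {(a, b) \<in> verts (blowup G v N) \<times> verts (blowup G v N).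
        (twin_proj G v a, twin_proj G v b) \<in> arcs G}"
  unfolding blowup_def verts_def arcs_def by simp_all

lemma wf_blowup: "wf_graph G \<Longrightarrow> wf_graph (blowup G v N)"
  unfolding wf_graph_def verts_blowup arcs_blowup fresh_def by auto

text \<open>Moving v to any one of the N fresh twins gives N distinct homomorphisms G \<rightarrow> blow-up.\<close>
lemma hom_blowup_ge:
  assumes G: "wf_graph G" and v: "v \<in> verts G"
  shows "N \<le> hom G (blowup G v N)"
proof -
  define move where "move d = restrict (\<lambda>u. if u = v then d else u) (verts G)" for d
  have move_v: "move d v = d" for d using v unfolding move_def by simp
  have move_in: "move d u \<in> verts (blowup G v N)" if "d \<in> fresh G N" "u \<in> verts G" for d u
    using that unfolding move_def verts_blowup by simp
  have proj: "twin_proj G v (move d u) = u" if "d \<in> fresh G N" "u \<in> verts G" for d u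
    using that fresh_notin_verts[OF wf_graphD(1)[OF G] that(1)]
    unfolding move_def twin_proj_def by simp
  have move_Hom: "move d \<in> Hom G (blowup G v N)" if d: "d \<in> fresh G N" for d
  proof -
    have "(move d a, move d b) \<in> arcs (blowup G v N)" if ab: "(a, b) \<in> arcs G" for a b
    proof -
      have "a \<in> verts G" "b \<in> verts G" using ab wf_graphD(3)[OF G] by auto
      then show ?thesis using ab move_in[OF d] proj[OF d] unfolding arcs_blowup by simp
    qed
    moreover have "move d \<in> verts G \<rightarrow>\<^sub>E verts (blowup G v N)"
      using move_in[OF d] unfolding move_def by simp
    ultimately show ?thesis unfolding Hom_def by blast
  qed
  have "inj_on move (fresh G N)" by (rule inj_onI) (metis move_v)
  then have "N = card (move ` fresh G N)" by (simp add: card_image fresh_def)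
  also have "\<dots> \<le> hom G (blowup G v N)" unfolding hom_def
    using move_Hom finite_Hom[OF wf_graphD(1)[OF G] wf_graphD(1)[OF wf_blowup[OF G]]]
    by (intro card_mono) auto
  finally show ?thesis .
qed

text \<open>If no homomorphism F \<rightarrow> G hits v, then no homomorphism F \<rightarrow> blow-up hits a fresh
  vertex, so composing with twin_proj injects Hom(F, blow-up) into Hom(F, G).\<close>
lemma hom_blowup_le:
  assumes F: "wf_graph F" and G: "wf_graph G" and v: "v \<in> verts G"
    and uncovered: "\<forall>\<phi>\<in>Hom F G. v \<notin> \<phi> ` verts F"
  shows "hom F (blowup G v N) \<le> hom F G"
proof -
  let ?proj = "\<lambda>h. restrict (twin_proj G v \<circ> h) (verts F)"
  have proj_Hom: "?proj h \<in> Hom F G" if h: "h \<in> Hom F (blowup G v N)" for h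
  proof -
    have "?proj h \<in> verts F \<rightarrow>\<^sub>E verts G" using v unfolding twin_proj_def by auto
    moreover have "(?proj h a, ?proj h b) \<in> arcs G" if ab: "(a, b) \<in> arcs F" for a b
    proof -
      have "a \<in> verts F" "b \<in> verts F" using ab wf_graphD(3)[OF F] by auto
      moreover have "(h a, h b) \<in> arcs (blowup G v N)" using h ab unfolding Hom_def by auto
      ultimately show ?thesis unfolding arcs_blowup by simp
    qed
    ultimately show ?thesis unfolding Hom_def by blast
  qed
  have proj_id: "?proj h a = h a" if h: "h \<in> Hom F (blowup G v N)" and a: "a \<in> verts F" for h a
  proof -
    have "v \<notin> ?proj h ` verts F" using uncovered proj_Hom[OF h] by blast
    then have "?proj h a \<noteq> v" using a by (metis image_eqI)
    then show ?thesis using a unfolding twin_proj_def by (simp split: if_splits)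
  qed
  have "inj_on ?proj (Hom F (blowup G v N))"
  proof (rule inj_onI)
    fix h h' assume h: "h \<in> Hom F (blowup G v N)" "h' \<in> Hom F (blowup G v N)"
      and eq: "?proj h = ?proj h'"
    show "h = h'" by (rule Hom_eqI[OF h]) (metis eq h proj_id)
  qed
  moreover have "?proj ` Hom F (blowup G v N) \<subseteq> Hom F G" using proj_Hom by blast
  ultimately show ?thesis unfolding hom_def
    using finite_Hom[OF wf_graphD(1)[OF F] wf_graphD(1)[OF G]] by (intro card_inj_on_le)
qed

text \<open>Hence, with HDE F G = c > 0, hom(F,T) \<ge> hom(G,T)^c fails for a large enough blow-up.\<close>
lemma cover_of_HDE_pos:
  assumes F: "wf_graph F" and G: "wf_graph G" and FG: "homto F G" and pos: "HDE F G > 0"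
  shows "(\<Union>\<phi>\<in>Hom F G. \<phi> ` verts F) = verts G"
proof (rule ccontr)
  assume "\<not> ?thesis"
  moreover have "(\<Union>\<phi>\<in>Hom F G. \<phi> ` verts F) \<subseteq> verts G" unfolding Hom_def by auto
  ultimately obtain v where v: "v \<in> verts G" and uncovered: "\<forall>\<phi>\<in>Hom F G. v \<notin> \<phi> ` verts F"
    by blast
  define c where "c = HDE F G"
  define K where "K = real (hom F G)"
  define N where "N = nat \<lceil>(K + 1) powr (1 / c)\<rceil>"
  define T where "T = blowup G v N"
  have c: "c > 0" using pos c_def by simp
  have "(K + 1) powr (1 / c) \<le> real N" unfolding N_def by linarith
  also have "\<dots> \<le> real (hom G T)" using hom_blowup_ge[OF G v] unfolding T_def by simp
  finally have "((K + 1) powr (1 / c)) powr c \<le> real (hom G T) powr c"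
    using c by (intro powr_mono2) auto
  also have "\<dots> \<le> real (hom F T)"
    using HDE_admissible[OF F G FG wf_blowup[OF G]] unfolding T_def c_def .
  also have "\<dots> \<le> K" unfolding K_def T_def using hom_blowup_le[OF F G v uncovered] by simp
  finally have "((K + 1) powr (1 / c)) powr c \<le> K" .
  moreover have "((K + 1) powr (1 / c)) powr c = K + 1"
    using c unfolding K_def by (simp add: powr_powr)
  ultimately show False by simp
qed

section \<open>Antisymmetry: hom-equivalent graphs are isomorphic\<close>

text \<open>Lovasz's argument. Homomorphisms into the induced subgraph X[Y] are the homomorphisms
  into X with image inside Y, so hom(A, X[Y]) is the sum over Z \<subseteq> Y of the number of
  homomorphisms A \<rightarrow> X with image exactly Z. This triangular system determines those numbers
  from the values hom(A, X[Z]); hence graphs with the same hom-counts have the same numbers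
  of vertex-surjective homomorphisms onto every graph.\<close>
definition induced :: "graph \<Rightarrow> nat set \<Rightarrow> graph" where
  "induced X Y = (Y, arcs X \<inter> Y \<times> Y)"

definition onto_count :: "graph \<Rightarrow> graph \<Rightarrow> nat set \<Rightarrow> nat" where
  "onto_count A X Y = card {f \<in> Hom A X. f ` verts A = Y}"

lemma Hom_induced:
  "wf_graph A \<Longrightarrow> Y \<subseteq> verts X \<Longrightarrow> Hom A (induced X Y) = {f \<in> Hom A X. f ` verts A \<subseteq> Y}"
  unfolding Hom_def induced_def wf_graph_def verts_def arcs_def by (auto simp: PiE_def Pi_def; blast)

lemma hom_induced_sum:
  assumes A: "wf_graph A" and X: "finite (verts X)" and Y: "Y \<subseteq> verts X"
  shows "hom A (induced X Y) = (\<Sum>Z\<in>Pow Y. onto_count A X Z)"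
proof -
  have "Hom A (induced X Y) = (\<Union>Z\<in>Pow Y. {f \<in> Hom A X. f ` verts A = Z})"
    unfolding Hom_induced[OF A Y] by blast
  then show ?thesis unfolding hom_def onto_count_def
    using finite_Hom[OF wf_graphD(1)[OF A] X] finite_subset[OF Y X]
    by (simp, intro card_UN_disjoint) auto
qed

text \<open>Hom-equal graphs agree on induced subgraphs, including the empty (ill-formed) one,
  into which no graph with a vertex maps.\<close>
lemma hom_induced_eq:
  assumes F: "wf_graph F" and G: "wf_graph G" and eq: "\<And>T. wf_graph T \<Longrightarrow> hom F T = hom G T"
    and X: "finite (verts X)" and Y: "Y \<subseteq> verts X"
  shows "hom F (induced X Y) = hom G (induced X Y)"
proof (cases "Y = {}")
  case True
  have "Hom A (induced X Y) = {}" if "wf_graph A" for A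
    using wf_graphD(2)[OF that] True unfolding Hom_def induced_def verts_def
    by (auto simp: PiE_eq_empty_iff)
  then show ?thesis using F G unfolding hom_def by simp
next
  case False
  have "wf_graph (induced X Y)"
    unfolding wf_graph_def induced_def verts_def arcs_def using False finite_subset[OF Y X] by auto
  then show ?thesis by (rule eq)
qed

lemma onto_count_eq:
  assumes F: "wf_graph F" and G: "wf_graph G" and eq: "\<And>T. wf_graph T \<Longrightarrow> hom F T = hom G T"
    and X: "finite (verts X)" and Y: "Y \<subseteq> verts X"
  shows "onto_count F X Y = onto_count G X Y"
  using finite_subset[OF Y X] Y
proof (induction Y rule: finite_psubset_induct)
  case (psubset Y)
  have split: "(\<Sum>Z\<in>Pow Y. onto_count A X Z) = onto_count A X Y + (\<Sum>Z\<in>Pow Y - {Y}. onto_count A X Z)"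
    for A using psubset.hyps by (subst sum.remove[of _ Y]) auto
  have "(\<Sum>Z\<in>Pow Y - {Y}. onto_count F X Z) = (\<Sum>Z\<in>Pow Y - {Y}. onto_count G X Z)"
    using psubset.IH psubset.prems by (intro sum.cong) auto
  moreover have "(\<Sum>Z\<in>Pow Y. onto_count F X Z) = (\<Sum>Z\<in>Pow Y. onto_count G X Z)"
    using hom_induced_sum[OF F X psubset.prems] hom_induced_sum[OF G X psubset.prems]
      hom_induced_eq[OF F G eq X psubset.prems] by simp
  ultimately show ?case using split[of F] split[of G] by simp
qed

text \<open>The identity of F is vertex-surjective, so a hom-equal G maps onto F as well.\<close>
lemma surjective_Hom_of_hom_eq:
  assumes F: "wf_graph F" and G: "wf_graph G" and eq: "\<And>T. wf_graph T \<Longrightarrow> hom F T = hom G T"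
  obtains g where "g \<in> Hom G F" "g ` verts G = verts F"
proof -
  have fin: "finite (verts F)" using wf_graphD(1)[OF F] .
  have "restrict id (verts F) \<in> {f \<in> Hom F F. f ` verts F = verts F}"
    using wf_graphD(3)[OF F] unfolding Hom_def by auto
  then have "onto_count F F (verts F) \<noteq> 0"
    unfolding onto_count_def using finite_Hom[OF fin fin] by (auto simp: card_eq_0_iff)
  then have "onto_count G F (verts F) \<noteq> 0" using onto_count_eq[OF F G eq fin] by simp
  then have "{f \<in> Hom G F. f ` verts G = verts F} \<noteq> {}" unfolding onto_count_def by force
  then show ?thesis using that by blast
qed

lemma inj_on_arcs_of_inj_Hom:
  assumes A: "wf_graph A" and f: "f \<in> Hom A B" and inj: "inj_on f (verts A)"
  shows "inj_on (map_prod f f) (arcs A)" and "map_prod f f ` arcs A \<subseteq> arcs B"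
proof -
  show "inj_on (map_prod f f) (arcs A)"
  proof (rule inj_onI)
    fix x y assume xy: "x \<in> arcs A" "y \<in> arcs A" and eq: "map_prod f f x = map_prod f f y"
    have "fst x \<in> verts A" "snd x \<in> verts A" "fst y \<in> verts A" "snd y \<in> verts A"
      using xy wf_graphD(3)[OF A] by auto
    moreover have "f (fst x) = f (fst y)" "f (snd x) = f (snd y)"
      using eq by (simp_all add: map_prod_def split_beta)
    ultimately show "x = y" using inj_onD[OF inj] by (simp add: prod_eq_iff)
  qed
  show "map_prod f f ` arcs A \<subseteq> arcs B" using f unfolding Hom_def by auto
qed

text \<open>Vertex-surjective homomorphisms in both directions force an isomorphism: by counting,
  they are bijective on vertices and arcs.\<close>
lemma graph_iso_of_surjective_Homs:
  assumes F: "wf_graph F" and G: "wf_graph G"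
    and f: "f \<in> Hom F G" "f ` verts F = verts G" and g: "g \<in> Hom G F" "g ` verts G = verts F"
  shows "graph_iso F G"
proof -
  have fin: "finite (verts F)" "finite (verts G)" "finite (arcs F)" "finite (arcs G)"
    using wf_graphD[OF F] wf_graphD[OF G] by (meson finite_SigmaI finite_subset)+
  have card_eq: "card (verts F) = card (verts G)"
    using card_image_le[OF fin(1), of f] card_image_le[OF fin(2), of g] f(2) g(2) by simp
  have inj_f: "inj_on f (verts F)" and inj_g: "inj_on g (verts G)"
    using f(2) g(2) card_eq fin by (auto intro: eq_card_imp_inj_on)
  note arcs_f = inj_on_arcs_of_inj_Hom[OF F f(1) inj_f]
  note arcs_g = inj_on_arcs_of_inj_Hom[OF G g(1) inj_g]
  have "card (arcs G) \<le> card (arcs F)"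
    using card_inj_on_le[OF arcs_g fin(3)] .
  also have "\<dots> = card (map_prod f f ` arcs F)" using card_image[OF arcs_f(1)] by simp
  finally have arcs_eq: "map_prod f f ` arcs F = arcs G"
    using card_seteq[OF fin(4) arcs_f(2)] by simp
  have "(a, b) \<in> arcs F \<longleftrightarrow> (f a, f b) \<in> arcs G" if "a \<in> verts F" "b \<in> verts F" for a b
  proof
    assume "(f a, f b) \<in> arcs G"
    then obtain a' b' where ab': "(a', b') \<in> arcs F" "f a' = f a" "f b' = f b"
      unfolding arcs_eq[symmetric] by auto
    moreover have "a' \<in> verts F" "b' \<in> verts F" using ab'(1) wf_graphD(3)[OF F] by auto
    ultimately have "a' = a" "b' = b" using inj_onD[OF inj_f] that by auto
    then show "(a, b) \<in> arcs F" using ab' by simp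
  qed (use arcs_eq in auto)
  moreover have "bij_betw f (verts F) (verts G)" using inj_f f(2) by (simp add: bij_betw_def)
  ultimately show ?thesis unfolding graph_iso_def by blast
qed

lemma graph_iso_of_hom_eq:
  assumes F: "wf_graph F" and G: "wf_graph G" and eq: "\<And>T. wf_graph T \<Longrightarrow> hom F T = hom G T"
  shows "graph_iso F G"
proof -
  obtain g where "g \<in> Hom G F" "g ` verts G = verts F"
    using surjective_Hom_of_hom_eq[OF F G eq] .
  moreover obtain f where "f \<in> Hom F G" "f ` verts F = verts G"
    using surjective_Hom_of_hom_eq[OF G F eq[symmetric]] .
  ultimately show ?thesis using graph_iso_of_surjective_Homs[OF F G] by blast
qed

theorem lemma2p2:
  fixes F G H :: graph
  assumes "wf_graph F" and "wf_graph G" and "wf_graph H"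
  shows
   "(homto F G \<longrightarrow> (\<forall>T. wf_graph T \<longrightarrow> real (hom G T) powr HDE F G \<le> real (hom F T)))
    \<and> (succeq F F
       \<and> (succeq F G \<and> succeq G H \<longrightarrow> succeq F H)
       \<and> (succeq F G \<and> succeq G F \<longrightarrow> graph_iso F G))
    \<and> (homto F G \<and> homto G H \<longrightarrow> HDE F H \<ge> HDE F G * HDE G H)
    \<and> (homto F G \<longrightarrow> (\<forall>m n :: nat. m > 0 \<and> n > 0 \<longrightarrow>
          HDE (copies m F) (copies n G) = real m / real n * HDE F G))
    \<and> ((\<exists>f\<in>Hom F G. f ` verts F = verts G) \<longrightarrow> succeq F G)
    \<and> (homto F G \<longrightarrow> (HDE F G > 0 \<longleftrightarrow> (\<Union>\<phi>\<in>Hom F G. \<phi> ` verts F) = verts G))"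
proof (intro conjI impI allI)
  note wf = assms
  show "real (hom G T) powr HDE F G \<le> real (hom F T)" if "homto F G" "wf_graph T" for T
    using HDE_admissible[OF wf(1,2) that] .
  show "succeq F F" using succeq_refl[OF wf(1)] .
  show "succeq F H" if "succeq F G \<and> succeq G H"
    using succeq_trans[OF wf] that by simp
  show "graph_iso F G" if "succeq F G \<and> succeq G F"
  proof (rule graph_iso_of_hom_eq[OF wf(1,2)])
    fix T assume "wf_graph T"
    then show "hom F T = hom G T"
      using hom_le_of_succeq[OF wf(1,2)] hom_le_of_succeq[OF wf(2,1)] that le_antisym by metis
  qed
  show "HDE F H \<ge> HDE F G * HDE G H" if "homto F G \<and> homto G H"
    using HDE_mult_le[OF wf] that by simp
  show "HDE (copies m F) (copies n G) = real m / real n * HDE F G"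
    if "homto F G" "m > 0 \<and> n > 0" for m n
    using HDE_copies[OF wf(1,2) that(1)] that(2) by simp
  show "succeq F G" if "\<exists>f\<in>Hom F G. f ` verts F = verts G"
    using succeq_of_surjective_Hom[OF wf(1,2)] that by blast
  show "HDE F G > 0 \<longleftrightarrow> (\<Union>\<phi>\<in>Hom F G. \<phi> ` verts F) = verts G" if "homto F G"
    using cover_of_HDE_pos[OF wf(1,2) that] HDE_pos_of_cover[OF wf(1,2) that] by blast
qed

end
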